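(* Let $n\ge 4$, let $\emptyset\ne S\subseteq V$, and let $x=(i,j)$ and $y=(i',j')$ be distinct vertices of $K_n\times K_n$. Let $a_r=|L_r\cap S|$ for $r\in\{i,i'\}$ and $b_s=|L^s\cap S|$ for $s\in\{j,j'\}$. (1) If $x,y$ lie in the same horizontal layer (i.e. $j=j'$), then $\Delta_S(x,y)=a_i+a_{i'}+|\{x,y\}\cap S|$. (2) If $x,y$ lie in the same vertical layer (i.e. $i=i'$), then $\Delta_S(x,y)=b_j+b_{j'}+|\{x,y\}\cap S|$. (3) If $x,y$ lie in different layers (i.e. $i\ne i'$ and $j\ne j'$), and $z_1=(i',j)$, $z_2=(i,j')$, then $\Delta_S(x,y)=a_i+a_{i'}+b_j+b_{j'}-|\{x,y\}\cap S|-2|\{z_1,z_2\}\cap S|$.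
   Context: $K_n\times K_n$ is the direct product of two complete graphs on $n$ vertices: vertex set $V=[n]\times[n]$ with $[n]=\{1,\dots,n\}$, and $(i,j)$ adjacent to $(i',j')$ iff $i\ne i'$ and $j\ne j'$; $d$ denotes its graph distance. For $i,j\in[n]$, the vertical layer is $L_i=\{(i,j):j\in[n]\}$ and the horizontal layer is $L^j=\{(i,j):i\in[n]\}$. For vertices $x,y,z$ and $S\subseteq V$, $\Delta_z(x,y)=|d(x,z)-d(y,z)|$ and $\Delta_S(x,y)=\sum_{z\in S}\Delta_z(x,y)$. *)

theory Defs
  imports Main
begin

text \<open>The direct product K_n x K_n: vertex set [n] x [n] with [n] = {1..n}.\<close>

definition V :: "nat \<Rightarrow> (nat \<times> nat) set" where
  "V n = {1..n} \<times> {1..n}"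

definition adj :: "nat \<Rightarrow> nat \<times> nat \<Rightarrow> nat \<times> nat \<Rightarrow> bool" where
  "adj n u v \<longleftrightarrow> u \<in> V n \<and> v \<in> V n \<and> fst u \<noteq> fst v \<and> snd u \<noteq> snd v"

definition walk :: "nat \<Rightarrow> (nat \<times> nat) list \<Rightarrow> bool" where
  "walk n xs \<longleftrightarrow> xs \<noteq> [] \<and> set xs \<subseteq> V n \<and>
     (\<forall>k. Suc k < length xs \<longrightarrow> adj n (xs ! k) (xs ! Suc k))"

definition dist :: "nat \<Rightarrow> nat \<times> nat \<Rightarrow> nat \<times> nat \<Rightarrow> nat" where
  "dist n u v = (LEAST k. \<exists>xs. walk n xs \<and> hd xs = u \<and> last xs = v \<and> length xs = Suc k)"

definition vlayer :: "nat \<Rightarrow> nat \<Rightarrow> (nat \<times> nat) set" where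
  "vlayer n i = {(i, j) | j. j \<in> {1..n}}"

definition hlayer :: "nat \<Rightarrow> nat \<Rightarrow> (nat \<times> nat) set" where
  "hlayer n j = {(i, j) | i. i \<in> {1..n}}"

definition Delta :: "nat \<Rightarrow> nat \<times> nat \<Rightarrow> nat \<times> nat \<Rightarrow> nat \<times> nat \<Rightarrow> int" where
  "Delta n z x y = \<bar>int (dist n x z) - int (dist n y z)\<bar>"

definition DeltaS :: "nat \<Rightarrow> (nat \<times> nat) set \<Rightarrow> nat \<times> nat \<Rightarrow> nat \<times> nat \<Rightarrow> int" where
  "DeltaS n S x y = (\<Sum>z\<in>S. Delta n z x y)"

end

theory Submission
  imports Defs
begin

text \<open>Two distinct vertices of \<open>K\<^sub>n \<times> K\<^sub>n\<close> are adjacent iff they differ in both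
  coordinates, and for \<open>n \<ge> 3\<close> any two vertices have a common neighbour, so distances
  are 0, 1 or 2. Hence \<open>\<Delta>\<^sub>z(x, y)\<close> depends only on which layers through \<open>x\<close> and
  \<open>y\<close> contain \<open>z\<close>; it is a sum of layer indicators, and summing over \<open>S\<close> turns
  these into the layer counts.\<close>

lemma exists_avoiding_two:
  fixes n p q :: nat
  assumes "n \<ge> 3"
  shows "\<exists>b\<in>{1..n}. b \<noteq> p \<and> b \<noteq> q"
proof -
  have "{1, 2, 3} \<subseteq> {1..n}" using assms by auto
  moreover have "\<exists>b\<in>{1, 2, 3 :: nat}. b \<noteq> p \<and> b \<noteq> q" by auto
  ultimately show ?thesis by blast
qed

lemma common_neighbour:
  assumes "n \<ge> 3" and "u \<in> V n" and "v \<in> V n"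
  shows "\<exists>w. adj n u w \<and> adj n w v"
proof -
  obtain a where "a \<in> {1..n}" "a \<noteq> fst u" "a \<noteq> fst v"
    using exists_avoiding_two[OF assms(1)] by blast
  moreover obtain b where "b \<in> {1..n}" "b \<noteq> snd u" "b \<noteq> snd v"
    using exists_avoiding_two[OF assms(1)] by blast
  ultimately have "adj n u (a, b) \<and> adj n (a, b) v"
    using assms(2,3) by (auto simp: adj_def V_def)
  then show ?thesis by blast
qed

lemma walk_singleton: "walk n [u] \<longleftrightarrow> u \<in> V n"
  by (simp add: walk_def)

lemma walk_pair: "walk n [u, v] \<longleftrightarrow> adj n u v"
  by (auto simp: walk_def adj_def less_Suc_eq)

lemma walk_triple: "walk n [u, w, v] \<longleftrightarrow> adj n u w \<and> adj n w v"
  by (auto simp: walk_def adj_def less_Suc_eq nth_Cons split: nat.splits)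

lemma hd_eq_last_if_length_1: "length xs = 1 \<Longrightarrow> hd xs = last xs"
  by (cases xs) auto

lemma walk_length_2_adj:
  assumes "walk n xs" and "length xs = 2"
  shows "adj n (hd xs) (last xs)"
proof -
  obtain u v where "xs = [u, v]"
    using assms(2) by (cases xs; cases "tl xs") auto
  then show ?thesis using assms(1) walk_pair by simp
qed

lemma dist_eqI:
  assumes "walk n xs" and "hd xs = u" and "last xs = v" and "length xs = Suc k"
    and "\<And>ys m. walk n ys \<Longrightarrow> hd ys = u \<Longrightarrow> last ys = v \<Longrightarrow> length ys = Suc m \<Longrightarrow> k \<le> m"
  shows "dist n u v = k"
  unfolding dist_def using assms by (intro Least_equality) blast+

lemma dist_self:
  assumes "u \<in> V n"
  shows "dist n u u = 0"
  using assms by (intro dist_eqI[of n "[u]"]) (auto simp: walk_singleton)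

lemma dist_adj:
  assumes "adj n u v"
  shows "dist n u v = 1"
proof (rule dist_eqI[of n "[u, v]"])
  fix ys m assume ys: "hd ys = u" "last ys = v" "length ys = Suc m"
  have "u \<noteq> v" using assms by (auto simp: adj_def)
  then show "1 \<le> m" using ys hd_eq_last_if_length_1[of ys] by fastforce
qed (use assms in \<open>simp_all add: walk_pair\<close>)

lemma dist_not_adj:
  assumes "n \<ge> 3" and "u \<in> V n" and "v \<in> V n" and "u \<noteq> v" and "\<not> adj n u v"
  shows "dist n u v = 2"
proof -
  obtain w where "adj n u w" "adj n w v"
    using common_neighbour[OF assms(1-3)] by blast
  then show ?thesis
  proof (intro dist_eqI[of n "[u, w, v]"])
    fix ys m assume ys: "walk n ys" "hd ys = u" "last ys = v" "length ys = Suc m"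
    have "m \<noteq> 0" using ys(2-4) assms(4) hd_eq_last_if_length_1[of ys] by auto
    moreover have "m \<noteq> 1" using ys walk_length_2_adj assms(5) by fastforce
    ultimately show "2 \<le> m" by linarith
  qed (simp_all add: walk_triple)
qed

lemma dist_formula:
  assumes "n \<ge> 3" and "u \<in> V n" and "v \<in> V n"
  shows "dist n u v =
    (if u = v then 0 else if fst u \<noteq> fst v \<and> snd u \<noteq> snd v then 1 else 2)"
  using assms dist_self dist_adj dist_not_adj by (auto simp: adj_def)

lemma vlayer_iff: "z \<in> V n \<Longrightarrow> z \<in> vlayer n i \<longleftrightarrow> fst z = i"
  by (cases z) (auto simp: vlayer_def V_def)

lemma hlayer_iff: "z \<in> V n \<Longrightarrow> z \<in> hlayer n j \<longleftrightarrow> snd z = j"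
  by (cases z) (auto simp: hlayer_def V_def)

lemma Delta_formula:
  assumes "n \<ge> 3" and "z \<in> V n" and "x \<in> V n" and "y \<in> V n"
  shows "Delta n z x y = \<bar>int (if x = z then 0 else if fst x \<noteq> fst z \<and> snd x \<noteq> snd z then 1 else 2)
      - int (if y = z then 0 else if fst y \<noteq> fst z \<and> snd y \<noteq> snd z then 1 else 2)\<bar>"
  using assms by (simp add: Delta_def dist_formula)

lemma Delta_same_hlayer:
  assumes "n \<ge> 3" and "z \<in> V n" and "(i, j) \<in> V n" and "(i', j) \<in> V n" and "i \<noteq> i'"
  shows "Delta n z (i, j) (i', j) =
    of_bool (z \<in> vlayer n i) + of_bool (z \<in> vlayer n i') + of_bool (z \<in> {(i, j), (i', j)})"
  using assms by (cases z) (auto simp: Delta_formula vlayer_iff)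

lemma Delta_same_vlayer:
  assumes "n \<ge> 3" and "z \<in> V n" and "(i, j) \<in> V n" and "(i, j') \<in> V n" and "j \<noteq> j'"
  shows "Delta n z (i, j) (i, j') =
    of_bool (z \<in> hlayer n j) + of_bool (z \<in> hlayer n j') + of_bool (z \<in> {(i, j), (i, j')})"
  using assms by (cases z) (auto simp: Delta_formula hlayer_iff)

lemma Delta_different_layers:
  assumes "n \<ge> 3" and "z \<in> V n" and "(i, j) \<in> V n" and "(i', j') \<in> V n"
    and "i \<noteq> i'" and "j \<noteq> j'"
  shows "Delta n z (i, j) (i', j') =
    of_bool (z \<in> vlayer n i) + of_bool (z \<in> vlayer n i')
    + of_bool (z \<in> hlayer n j) + of_bool (z \<in> hlayer n j')
    - of_bool (z \<in> {(i, j), (i', j')}) - 2 * of_bool (z \<in> {(i', j), (i, j')})"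
  using assms by (cases z) (auto simp: Delta_formula vlayer_iff hlayer_iff)

lemma finite_V: "finite (V n)"
  by (simp add: V_def)

lemma sum_of_bool_mem:
  "finite S \<Longrightarrow> (\<Sum>z\<in>S. of_bool (z \<in> A) :: 'a :: semiring_1) = of_nat (card (A \<inter> S))"
  by (simp add: Int_commute)

lemma DeltaS_same_hlayer:
  assumes "n \<ge> 3" and "S \<subseteq> V n" and "(i, j) \<in> V n" and "(i', j) \<in> V n" and "i \<noteq> i'"
  shows "DeltaS n S (i, j) (i', j) =
    int (card (vlayer n i \<inter> S)) + int (card (vlayer n i' \<inter> S))
    + int (card ({(i, j), (i', j)} \<inter> S))"
proof -
  have "finite S" using assms(2) finite_V finite_subset by blast
  moreover have "DeltaS n S (i, j) (i', j) = (\<Sum>z\<in>S.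
      of_bool (z \<in> vlayer n i) + of_bool (z \<in> vlayer n i') + of_bool (z \<in> {(i, j), (i', j)}))"
    unfolding DeltaS_def using assms by (intro sum.cong refl Delta_same_hlayer) auto
  ultimately show ?thesis by (simp only: sum.distrib sum_of_bool_mem)
qed

lemma DeltaS_same_vlayer:
  assumes "n \<ge> 3" and "S \<subseteq> V n" and "(i, j) \<in> V n" and "(i, j') \<in> V n" and "j \<noteq> j'"
  shows "DeltaS n S (i, j) (i, j') =
    int (card (hlayer n j \<inter> S)) + int (card (hlayer n j' \<inter> S))
    + int (card ({(i, j), (i, j')} \<inter> S))"
proof -
  have "finite S" using assms(2) finite_V finite_subset by blast
  moreover have "DeltaS n S (i, j) (i, j') = (\<Sum>z\<in>S.
      of_bool (z \<in> hlayer n j) + of_bool (z \<in> hlayer n j') + of_bool (z \<in> {(i, j), (i, j')}))"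
    unfolding DeltaS_def using assms by (intro sum.cong refl Delta_same_vlayer) auto
  ultimately show ?thesis by (simp only: sum.distrib sum_of_bool_mem)
qed

lemma DeltaS_different_layers:
  assumes "n \<ge> 3" and "S \<subseteq> V n" and "(i, j) \<in> V n" and "(i', j') \<in> V n"
    and "i \<noteq> i'" and "j \<noteq> j'"
  shows "DeltaS n S (i, j) (i', j') =
    int (card (vlayer n i \<inter> S)) + int (card (vlayer n i' \<inter> S))
    + int (card (hlayer n j \<inter> S)) + int (card (hlayer n j' \<inter> S))
    - int (card ({(i, j), (i', j')} \<inter> S))
    - 2 * int (card ({(i', j), (i, j')} \<inter> S))"
proof -
  have "finite S" using assms(2) finite_V finite_subset by blast
  moreover have "DeltaS n S (i, j) (i', j') = (\<Sum>z\<in>S.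
      of_bool (z \<in> vlayer n i) + of_bool (z \<in> vlayer n i')
      + of_bool (z \<in> hlayer n j) + of_bool (z \<in> hlayer n j')
      - of_bool (z \<in> {(i, j), (i', j')}) - 2 * of_bool (z \<in> {(i', j), (i, j')}))"
    unfolding DeltaS_def using assms by (intro sum.cong refl Delta_different_layers) auto
  ultimately show ?thesis
    by (simp only: sum.distrib sum_subtractf sum_distrib_left[symmetric] sum_of_bool_mem)
qed

theorem mainTheorem2:
  fixes n i j i' j' :: nat and S :: "(nat \<times> nat) set"
  assumes "n \<ge> 4"
    and "S \<noteq> {}" and "S \<subseteq> V n"
    and "(i, j) \<in> V n" and "(i', j') \<in> V n"
    and "(i, j) \<noteq> (i', j')"
  shows "(j = j' \<longrightarrow>
           DeltaS n S (i, j) (i', j') =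
             int (card (vlayer n i \<inter> S)) + int (card (vlayer n i' \<inter> S))
             + int (card ({(i, j), (i', j')} \<inter> S)))
       \<and> (i = i' \<longrightarrow>
           DeltaS n S (i, j) (i', j') =
             int (card (hlayer n j \<inter> S)) + int (card (hlayer n j' \<inter> S))
             + int (card ({(i, j), (i', j')} \<inter> S)))
       \<and> (i \<noteq> i' \<and> j \<noteq> j' \<longrightarrow>
           DeltaS n S (i, j) (i', j') =
             int (card (vlayer n i \<inter> S)) + int (card (vlayer n i' \<inter> S))
             + int (card (hlayer n j \<inter> S)) + int (card (hlayer n j' \<inter> S))
             - int (card ({(i, j), (i', j')} \<inter> S))
             - 2 * int (card ({(i', j), (i, j')} \<inter> S)))"
proof -
  have n: "n \<ge> 3" using assms(1) by simp
  show ?thesis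
  proof (intro conjI impI)
    assume j: "j = j'"
    with assms(6) have "i \<noteq> i'" by blast
    with j show "DeltaS n S (i, j) (i', j') =
        int (card (vlayer n i \<inter> S)) + int (card (vlayer n i' \<inter> S))
        + int (card ({(i, j), (i', j')} \<inter> S))"
      using DeltaS_same_hlayer[OF n assms(3,4)] assms(5) by simp
  next
    assume i: "i = i'"
    with assms(6) have "j \<noteq> j'" by blast
    with i show "DeltaS n S (i, j) (i', j') =
        int (card (hlayer n j \<inter> S)) + int (card (hlayer n j' \<inter> S))
        + int (card ({(i, j), (i', j')} \<inter> S))"
      using DeltaS_same_vlayer[OF n assms(3,4)] assms(5) by simp
  next
    assume "i \<noteq> i' \<and> j \<noteq> j'"
    then show "DeltaS n S (i, j) (i', j') =
        int (card (vlayer n i \<inter> S)) + int (card (vlayer n i' \<inter> S))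
        + int (card (hlayer n j \<inter> S)) + int (card (hlayer n j' \<inter> S))
        - int (card ({(i, j), (i', j')} \<inter> S))
        - 2 * int (card ({(i', j), (i, j')} \<inter> S))"
      using DeltaS_different_layers[OF n assms(3-5)] by blast
  qed
qed

end
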